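(* Let $(\mathbf{M}_i)_{i\in I}$ be a family of $L$-structures with an emerging metric along an ultrafilter $\mathcal{D}$ on $I$, with local ultraproduct $\mathbf{M}_{\mathrm{loc}}$. Let $\sigma(\bar x)$ be a formula (in the sense of general real-valued structures) in the vocabulary $L^+$ all of whose quantifiers are restricted to sorts $S_m$, and for each $i\in I$ let $\bar a(i)$ be a tuple of parameters in $M_i$, all lying in $S_{m_0}(M_i)$ for a fixed $m_0\in\mathbb{N}$. Let $\bar a=\mathsf{lm}^{\mathrm{loc}}([\bar a(i)]_{\mathcal{D}})\in\mathbf{M}_{\mathrm{loc}}$. Then $$\lim_{\mathcal{D}}\ \sigma^{\mathbf{M}_i}(\bar a(i))=\sigma^{\mathbf{M}_{\mathrm{loc}}}(\bar a),$$ where $\lim_{\mathcal{D}}$ is the limit of real numbers along the ultrafilter $\mathcal{D}$.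
   Context: Emerging metric: each $M_i$ carries subsets $S_m(M_i)$, $m\in\mathbb{N}$, with $S_m(M_i)\subseteq S_{m+1}(M_i)$, $\bigcup_m S_m(M_i)=M_i$, and a distance function $\mathsf{d}_i:M_i^2\to\mathbb{R}_{\ge0}$; in the first-order ultraproduct ${}^*\mathbf{M}=\prod_{\mathcal{D}}\mathbf{M}_i$, with $S_m({}^*M)=\prod_{\mathcal{D}}S_m(M_i)$ and induced hyperreal-valued $\mathsf{d}$, one requires: (1) the triangle inequality; (2) for each $n$-ary function symbol $f$ and $m$ some $k$ with $f(S_m({}^*M)^n)\subseteq S_k({}^*M)$; (3) $\mathsf{d}(x,y)\le m$ on $S_m({}^*M)$; (4) for each $f$, $m$, real $\epsilon>0$ a real $\delta>0$ with $\mathsf{d}(f(\bar x),f(\bar y))<\epsilon$ whenever $\bar x,\bar y\in S_m({}^*M)^n$, $\mathsf{d}(x_j,y_j)<\delta$ for all $j$; (5) for each relation symbol $P$, $m$, and $\bar x^0\in S_m({}^*M)^n\setminus P$ a real $\delta>0$ such that $\bar x\notin P$ whenever $\mathsf{d}(x^0_j,x_j)<\delta$ for all $j$. The local part ${}^*\mathbf{M}_{\mathrm{loc}}$ has universe $\bigcup_{m\in\mathbb{N}}S_m({}^*M)$; $x\approx y$ iff $\mathsf{d}(x,y)\le1/n$ for all $n\in\mathbb{N}$; $\mathbf{M}_{\mathrm{loc}}={}^*\mathbf{M}_{\mathrm{loc}}/\!\approx$ with induced functions, relations interpreted as images, $S_m$ interpreted as the image of $S_m({}^*M)$, and metric $\mathrm{st}\,\mathsf{d}$;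 $\mathsf{lm}^{\mathrm{loc}}$ is the quotient map. The vocabulary $L^+$ is $L$ without equality together with the distance symbol $\mathsf{d}$ and unary predicates $S_m$. Formulas are those of general (real-valued) structures: atomic formulas are $\mathsf{d}(t_1,t_2)$ and $P(\bar t)$ (a relation taking truth value $0$ if it holds and $1$ otherwise), connectives are arbitrary continuous real functions of finitely many arguments, quantifiers are $\sup_x$ and $\inf_x$ (here restricted to $x\in S_m$), and the truth value $\sigma^{\mathbf{N}}(\bar a)$ in a structure $\mathbf{N}$ is defined by induction on the formula, with $\mathsf{d}$ interpreted as $\mathsf{d}_i$ in $\mathbf{M}_i$ and as the metric in $\mathbf{M}_{\mathrm{loc}}$. *)

theory Defs
  imports Complex_Main
begin

datatype 'f trm = Var nat | App 'f "'f trm list"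

text \<open>Formulas of general (real-valued) structures in L+ (L without equality, plus d and S_m):
  atomic d(t1,t2) and P(ts); connectives = continuous real functions of finitely many
  arguments; quantifiers sup/inf over x restricted to a sort S_m:
  FSup m x phi is sup over x in S_m of phi.\<close>

datatype ('f, 'p) fml =
    FDist "'f trm" "'f trm"
  | FRel 'p "'f trm list"
  | FConn "real list \<Rightarrow> real" "('f, 'p) fml list"
  | FSup nat nat "('f, 'p) fml"
  | FInf nat nat "('f, 'p) fml"

definition cont_conn :: "nat \<Rightarrow> (real list \<Rightarrow> real) \<Rightarrow> bool" where
  "cont_conn n c \<longleftrightarrow> (\<forall>y. length y = n \<longrightarrow> (\<forall>e>0. \<exists>\<delta>>0. \<forall>x. length x = n \<and>
      (\<forall>j<n. \<bar>x ! j - y ! j\<bar> < \<delta>) \<longrightarrow> \<bar>c x - c y\<bar> < e))"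

fun wf_trm :: "('f \<Rightarrow> nat) \<Rightarrow> 'f trm \<Rightarrow> bool" where
  "wf_trm arf (Var v) = True"
| "wf_trm arf (App f ts) = (length ts = arf f \<and> (\<forall>t\<in>set ts. wf_trm arf t))"

fun wf_fml :: "('f \<Rightarrow> nat) \<Rightarrow> ('p \<Rightarrow> nat) \<Rightarrow> ('f, 'p) fml \<Rightarrow> bool" where
  "wf_fml arf arp (FDist t1 t2) = (wf_trm arf t1 \<and> wf_trm arf t2)"
| "wf_fml arf arp (FRel P ts) = (length ts = arp P \<and> (\<forall>t\<in>set ts. wf_trm arf t))"
| "wf_fml arf arp (FConn c fs) = (cont_conn (length fs) c \<and> (\<forall>g\<in>set fs. wf_fml arf arp g))"
| "wf_fml arf arp (FSup m x g) = wf_fml arf arp g"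
| "wf_fml arf arp (FInf m x g) = wf_fml arf arp g"

fun fv_trm :: "'f trm \<Rightarrow> nat set" where
  "fv_trm (Var v) = {v}"
| "fv_trm (App f ts) = (\<Union>t\<in>set ts. fv_trm t)"

fun fv :: "('f, 'p) fml \<Rightarrow> nat set" where
  "fv (FDist t1 t2) = fv_trm t1 \<union> fv_trm t2"
| "fv (FRel P ts) = (\<Union>t\<in>set ts. fv_trm t)"
| "fv (FConn c fs) = (\<Union>g\<in>set fs. fv g)"
| "fv (FSup m x g) = fv g - {x}"
| "fv (FInf m x g) = fv g - {x}"

text \<open>An L+-structure on (a subset of) the type 'a: interpretations of function symbols,
  relation symbols, the sorts S_m and the distance d.  Its universe is the union of the S_m.\<close>

record ('f, 'p, 'a) mstruct =
  Fn  :: "'f \<Rightarrow> 'a list \<Rightarrow> 'a"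
  Rel :: "'p \<Rightarrow> 'a list \<Rightarrow> bool"
  Srt :: "nat \<Rightarrow> 'a set"
  Dst :: "'a \<Rightarrow> 'a \<Rightarrow> real"

definition univ :: "('f, 'p, 'a, 'z) mstruct_scheme \<Rightarrow> 'a set" where
  "univ M = (\<Union>m. Srt M m)"

fun teval :: "('f, 'p, 'a, 'z) mstruct_scheme \<Rightarrow> (nat \<Rightarrow> 'a) \<Rightarrow> 'f trm \<Rightarrow> 'a" where
  "teval M env (Var v) = env v"
| "teval M env (App f ts) = Fn M f (map (teval M env) ts)"

text \<open>Truth values: a relation takes value 0 if it holds and 1 otherwise.\<close>
fun eval :: "('f, 'p, 'a, 'z) mstruct_scheme \<Rightarrow> (nat \<Rightarrow> 'a) \<Rightarrow> ('f, 'p) fml \<Rightarrow> real" where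
  "eval M env (FDist t1 t2) = Dst M (teval M env t1) (teval M env t2)"
| "eval M env (FRel P ts) = (if Rel M P (map (teval M env) ts) then 0 else 1)"
| "eval M env (FConn c fs) = c (map (eval M env) fs)"
| "eval M env (FSup m x g) = (SUP a\<in>Srt M m. eval M (env(x := a)) g)"
| "eval M env (FInf m x g) = (INF a\<in>Srt M m. eval M (env(x := a)) g)"

definition ultrafilter_filter :: "'i filter \<Rightarrow> bool" where
  "ultrafilter_filter D \<longleftrightarrow> D \<noteq> bot \<and> (\<forall>P. eventually P D \<or> eventually (\<lambda>i. \<not> P i) D)"

text \<open>Elements of the ultraproduct *M are represented by sequences x : 'i \<Rightarrow> 'a with
  x i \<in> M_i for D-almost all i (modulo D-almost-everywhere equality).  Atomic statements
  in *M (membership in S_m(*M), relations, and comparisons of the hyperreal d with reals)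
  hold iff they hold for D-almost all coordinates.\<close>

definition in_ult :: "('i \<Rightarrow> ('f, 'p, 'a) mstruct) \<Rightarrow> 'i filter \<Rightarrow> ('i \<Rightarrow> 'a) \<Rightarrow> bool" where
  "in_ult M D x \<longleftrightarrow> eventually (\<lambda>i. x i \<in> univ (M i)) D"

definition in_S :: "('i \<Rightarrow> ('f, 'p, 'a) mstruct) \<Rightarrow> 'i filter \<Rightarrow> nat \<Rightarrow> ('i \<Rightarrow> 'a) \<Rightarrow> bool" where
  "in_S M D m x \<longleftrightarrow> eventually (\<lambda>i. x i \<in> Srt (M i) m) D"

definition app_seq :: "('i \<Rightarrow> ('f, 'p, 'a) mstruct) \<Rightarrow> 'f \<Rightarrow> ('i \<Rightarrow> 'a) list \<Rightarrow> 'i \<Rightarrow> 'a" where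
  "app_seq M f xs = (\<lambda>i. Fn (M i) f (map (\<lambda>x. x i) xs))"

definition rel_seq :: "('i \<Rightarrow> ('f, 'p, 'a) mstruct) \<Rightarrow> 'i filter \<Rightarrow> 'p \<Rightarrow> ('i \<Rightarrow> 'a) list \<Rightarrow> bool" where
  "rel_seq M D P xs \<longleftrightarrow> eventually (\<lambda>i. Rel (M i) P (map (\<lambda>x. x i) xs)) D"

definition lstruct :: "('f \<Rightarrow> nat) \<Rightarrow> ('f, 'p, 'a) mstruct \<Rightarrow> bool" where
  "lstruct arf N \<longleftrightarrow> (\<forall>m. Srt N m \<subseteq> Srt N (Suc m))
     \<and> (\<forall>x\<in>univ N. \<forall>y\<in>univ N. Dst N x y \<ge> 0)
     \<and> (\<forall>f xs. length xs = arf f \<and> set xs \<subseteq> univ N \<longrightarrow> Fn N f xs \<in> univ N)"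

definition emerging_metric :: "('f \<Rightarrow> nat) \<Rightarrow> ('p \<Rightarrow> nat) \<Rightarrow> ('i \<Rightarrow> ('f, 'p, 'a) mstruct)
    \<Rightarrow> 'i filter \<Rightarrow> bool" where
  "emerging_metric arf arp M D \<longleftrightarrow>
     (\<forall>i. lstruct arf (M i))
     \<comment> \<open>(1) d is a pseudometric on *M (in particular the triangle inequality)\<close>
   \<and> (\<forall>x. in_ult M D x \<longrightarrow> eventually (\<lambda>i. Dst (M i) (x i) (x i) = 0) D)
   \<and> (\<forall>x y. in_ult M D x \<and> in_ult M D y \<longrightarrow>
        eventually (\<lambda>i. Dst (M i) (x i) (y i) = Dst (M i) (y i) (x i)) D)
   \<and> (\<forall>x y z. in_ult M D x \<and> in_ult M D y \<and> in_ult M D z \<longrightarrow>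
        eventually (\<lambda>i. Dst (M i) (x i) (z i) \<le> Dst (M i) (x i) (y i) + Dst (M i) (y i) (z i)) D)
     \<comment> \<open>(2)\<close>
   \<and> (\<forall>f m. \<exists>k. \<forall>xs. length xs = arf f \<and> (\<forall>x\<in>set xs. in_S M D m x) \<longrightarrow>
        in_S M D k (app_seq M f xs))
     \<comment> \<open>(3)\<close>
   \<and> (\<forall>m x y. in_S M D m x \<and> in_S M D m y \<longrightarrow>
        eventually (\<lambda>i. Dst (M i) (x i) (y i) \<le> real m) D)
     \<comment> \<open>(4)\<close>
   \<and> (\<forall>f m \<epsilon>. \<epsilon> > 0 \<longrightarrow> (\<exists>\<delta>>0. \<forall>xs ys. length xs = arf f \<and> length ys = arf f
        \<and> (\<forall>x\<in>set xs. in_S M D m x) \<and> (\<forall>y\<in>set ys. in_S M D m y)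
        \<and> (\<forall>j<arf f. eventually (\<lambda>i. Dst (M i) ((xs ! j) i) ((ys ! j) i) < \<delta>) D) \<longrightarrow>
        eventually (\<lambda>i. Dst (M i) (app_seq M f xs i) (app_seq M f ys i) < \<epsilon>) D))
     \<comment> \<open>(5)\<close>
   \<and> (\<forall>P m xs0. length xs0 = arp P \<and> (\<forall>x\<in>set xs0. in_S M D m x) \<and> \<not> rel_seq M D P xs0 \<longrightarrow>
        (\<exists>\<delta>>0. \<forall>xs. length xs = arp P \<and> (\<forall>x\<in>set xs. in_ult M D x)
           \<and> (\<forall>j<arp P. eventually (\<lambda>i. Dst (M i) ((xs0 ! j) i) ((xs ! j) i) < \<delta>) D) \<longrightarrow>
           \<not> rel_seq M D P xs))"

definition is_local :: "('i \<Rightarrow> ('f, 'p, 'a) mstruct) \<Rightarrow> 'i filter \<Rightarrow> ('i \<Rightarrow> 'a) \<Rightarrow> bool" where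
  "is_local M D x \<longleftrightarrow> (\<exists>m. in_S M D m x)"

definition inf_close :: "('i \<Rightarrow> ('f, 'p, 'a) mstruct) \<Rightarrow> 'i filter \<Rightarrow> ('i \<Rightarrow> 'a) \<Rightarrow> ('i \<Rightarrow> 'a) \<Rightarrow> bool" where
  "inf_close M D x y \<longleftrightarrow> (\<forall>n::nat. eventually (\<lambda>i. Dst (M i) (x i) (y i) \<le> 1 / real (Suc n)) D)"

definition lm_loc :: "('i \<Rightarrow> ('f, 'p, 'a) mstruct) \<Rightarrow> 'i filter \<Rightarrow> ('i \<Rightarrow> 'a) \<Rightarrow> ('i \<Rightarrow> 'a) set" where
  "lm_loc M D x = {y. is_local M D y \<and> inf_close M D x y}"

definition rep :: "('i \<Rightarrow> 'a) set \<Rightarrow> 'i \<Rightarrow> 'a" where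
  "rep c = (SOME x. x \<in> c)"

text \<open>M_loc: functions induced on classes, relations interpreted as images, S_m as image of
  S_m(*M), distance the standard part of d (= the D-limit of the coordinate distances).\<close>
definition Mloc :: "('i \<Rightarrow> ('f, 'p, 'a) mstruct) \<Rightarrow> 'i filter \<Rightarrow> ('f, 'p, ('i \<Rightarrow> 'a) set) mstruct" where
  "Mloc M D = \<lparr>
     Fn = (\<lambda>f cs. lm_loc M D (app_seq M f (map rep cs))),
     Rel = (\<lambda>P cs. \<exists>xs. length xs = length cs \<and> (\<forall>j<length cs. xs ! j \<in> cs ! j)
                        \<and> rel_seq M D P xs),
     Srt = (\<lambda>m. lm_loc M D ` {x. in_S M D m x}),
     Dst = (\<lambda>c1 c2. Lim D (\<lambda>i. Dst (M i) (rep c1 i) (rep c2 i))) \<rparr>"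

end

theory Submission
  imports Defs
begin

text \<open>
  Los's theorem for the local ultraproduct is proved by induction on the formula, for
  environments of local internal elements.  For atomic formulas, the operations, relations and
  distance of the local ultraproduct are well defined on classes of infinitely close elements by
  continuity (4), openness (5) and the triangle inequality, and distances on \<open>S\<^sub>m\<close> are
  bounded by \<open>m\<close> (3), so their limits along \<open>D\<close> exist.  Connectives commute with limits
  because they are continuous.  For \<open>sup\<close> and \<open>inf\<close> over \<open>S\<^sub>m\<close>, two facts are combined: the
  values of a formula are bounded along \<open>D\<close>, uniformly over \<open>S\<^sub>k\<close>-valued environments (by (3),
  and because a continuous connective is bounded on boxes); and a statement that holds along
  \<open>D\<close> for every internal sequence holds along \<open>D\<close> for all elements at once, since
  counterexamples can be chosen coordinatewise.  Hence the limit of the suprema over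
  \<open>S\<^sub>m(M\<^sub>i)\<close> is the supremum over \<open>S\<^sub>m(*M)\<close> of the limits.
\<close>

section \<open>Limits along an ultrafilter\<close>

lemma ultrafilter_filter_neq_bot: "ultrafilter_filter D \<Longrightarrow> D \<noteq> bot"
  by (simp add: ultrafilter_filter_def)

lemma ultrafilter_eventually_not_iff:
  assumes "ultrafilter_filter D"
  shows "eventually (\<lambda>i. \<not> P i) D \<longleftrightarrow> \<not> eventually P D"
proof
  assume "eventually (\<lambda>i. \<not> P i) D"
  then show "\<not> eventually P D"
    using ultrafilter_filter_neq_bot[OF assms] eventually_conj[of P D "\<lambda>i. \<not> P i"]
    by (auto simp: eventually_False)
qed (use assms in \<open>auto simp: ultrafilter_filter_def\<close>)

lemma ultrafilter_eventually_ball: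
  assumes D: "ultrafilter_filter D"
    and P: "\<And>y. eventually (\<lambda>i. y i \<in> A i) D \<Longrightarrow> eventually (\<lambda>i. P i (y i)) D"
  shows "eventually (\<lambda>i. \<forall>a\<in>A i. P i a) D"
proof (rule ccontr)
  assume "\<not> ?thesis"
  then have counterexamples: "eventually (\<lambda>i. \<exists>a\<in>A i. \<not> P i a) D"
    using ultrafilter_eventually_not_iff[OF D, of "\<lambda>i. \<forall>a\<in>A i. P i a"] by simp
  define y where "y i = (SOME a. a \<in> A i \<and> \<not> P i a)" for i
  from counterexamples have y: "eventually (\<lambda>i. y i \<in> A i \<and> \<not> P i (y i)) D"
    unfolding y_def by (rule eventually_mono) (rule someI_ex, blast)
  then have "eventually (\<lambda>i. P i (y i)) D"
    by (intro P) (auto elim: eventually_mono)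
  moreover have "eventually (\<lambda>i. \<not> P i (y i)) D"
    using y by (rule eventually_mono) simp
  ultimately show False
    using ultrafilter_eventually_not_iff[OF D] by blast
qed

lemma ultrafilter_bounded_tendsto:
  fixes f :: "'i \<Rightarrow> real"
  assumes D: "ultrafilter_filter D" and bounded: "eventually (\<lambda>i. \<bar>f i\<bar> \<le> B) D"
  shows "\<exists>L. (f \<longlongrightarrow> L) D"
proof -
  define T where "T = {t. eventually (\<lambda>i. t \<le> f i) D}"
  have "-B \<in> T"
    unfolding T_def using bounded by (auto elim!: eventually_mono)
  moreover have "t \<le> B" if "t \<in> T" for t
  proof -
    have "eventually (\<lambda>i. t \<le> f i \<and> \<bar>f i\<bar> \<le> B) D"
      using that bounded by (auto simp: T_def intro: eventually_conj)
    then obtain i where "t \<le> f i" "\<bar>f i\<bar> \<le> B"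
      using eventually_happens'[OF ultrafilter_filter_neq_bot[OF D]] by blast
    then show ?thesis by linarith
  qed
  then have bdd: "bdd_above T" by (auto simp: bdd_above_def)
  ultimately have "(f \<longlongrightarrow> Sup T) D"
  proof (intro order_tendstoI)
    fix a assume "a < Sup T"
    then obtain t where "t \<in> T" "a < t"
      using less_cSup_iff[of T a] \<open>-B \<in> T\<close> bdd by blast
    then show "eventually (\<lambda>i. a < f i) D"
      unfolding T_def by (auto elim: eventually_mono)
  next
    fix a assume "Sup T < a"
    then have "a \<notin> T" using bdd cSup_upper by fastforce
    then show "eventually (\<lambda>i. f i < a) D"
      using ultrafilter_eventually_not_iff[OF D, of "\<lambda>i. a \<le> f i"]
      by (auto simp: T_def not_le)
  qed
  then show ?thesis by blast
qed

lemma ultrafilter_tendsto_SUP_nonempty: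
  fixes f :: "'i \<Rightarrow> 'a \<Rightarrow> real" and G :: "('i \<Rightarrow> 'a) \<Rightarrow> real"
  assumes D: "ultrafilter_filter D"
    and conv: "\<And>y. eventually (\<lambda>i. y i \<in> A i) D \<Longrightarrow> ((\<lambda>i. f i (y i)) \<longlongrightarrow> G y) D"
    and bounded: "eventually (\<lambda>i. \<forall>a\<in>A i. \<bar>f i a\<bar> \<le> B) D"
    and nonempty: "eventually (\<lambda>i. A i \<noteq> {}) D"
  shows "((\<lambda>i. SUP a\<in>A i. f i a) \<longlongrightarrow> (SUP y\<in>{y. eventually (\<lambda>i. y i \<in> A i) D}. G y)) D"
    (is "(_ \<longlongrightarrow> (SUP y\<in>?S. G y)) D")
proof -
  have "(\<lambda>i. SOME a. a \<in> A i) \<in> ?S"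
    using nonempty by (simp add: some_in_eq)
  then have "?S \<noteq> {}" by (metis empty_iff)
  have "\<bar>G y\<bar> \<le> B" if "y \<in> ?S" for y
  proof -
    have y: "eventually (\<lambda>i. y i \<in> A i) D" using that by simp
    have "eventually (\<lambda>i. \<bar>f i (y i)\<bar> \<le> B) D"
      using y bounded by eventually_elim blast
    with tendsto_rabs[OF conv[OF y]] show ?thesis
      using ultrafilter_filter_neq_bot[OF D] by (intro tendsto_upperbound) auto
  qed
  then have bdd: "bdd_above (G ` ?S)"
    by (intro bdd_aboveI2[where M=B]) (simp add: abs_le_iff)
  have bdd_f: "eventually (\<lambda>i. bdd_above (f i ` A i)) D"
    using bounded by (rule eventually_mono) (intro bdd_aboveI2[where M=B], simp add: abs_le_iff)
  show ?thesis
  proof (rule order_tendstoI)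
    fix a assume "a < (SUP y\<in>?S. G y)"
    then obtain y where y: "y \<in> ?S" "a < G y"
      using less_cSUP_iff[OF \<open>?S \<noteq> {}\<close> bdd] by blast
    have y_in: "eventually (\<lambda>i. y i \<in> A i) D" using y(1) by simp
    with bdd_f order_tendstoD(1)[OF conv[OF y_in] y(2)]
    show "eventually (\<lambda>i. a < (SUP b\<in>A i. f i b)) D"
    proof eventually_elim
      case (elim i)
      then show ?case using cSUP_upper[of "y i" "A i" "f i"] by linarith
    qed
  next
    fix a assume "(SUP y\<in>?S. G y) < a"
    define a' where "a' = ((SUP y\<in>?S. G y) + a) / 2"
    have "eventually (\<lambda>i. f i (y i) < a') D" if "y \<in> ?S" for y
    proof (rule order_tendstoD(2)[OF conv])
      have "G y \<le> (SUP y\<in>?S. G y)" using that bdd by (rule cSUP_upper)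
      then show "G y < a'" using \<open>(SUP y\<in>?S. G y) < a\<close> by (simp add: a'_def)
    qed (use that in simp)
    then have "eventually (\<lambda>i. \<forall>b\<in>A i. f i b < a') D"
      by (intro ultrafilter_eventually_ball[OF D]) simp
    with nonempty show "eventually (\<lambda>i. (SUP b\<in>A i. f i b) < a) D"
    proof eventually_elim
      case (elim i)
      then have "(SUP b\<in>A i. f i b) \<le> a'" by (intro cSUP_least) auto
      then show ?case using \<open>(SUP y\<in>?S. G y) < a\<close> by (simp add: a'_def)
    qed
  qed
qed

lemma ultrafilter_tendsto_SUP:
  fixes f :: "'i \<Rightarrow> 'a \<Rightarrow> real" and G :: "('i \<Rightarrow> 'a) \<Rightarrow> real"
  assumes D: "ultrafilter_filter D"
    and conv: "\<And>y. eventually (\<lambda>i. y i \<in> A i) D \<Longrightarrow> ((\<lambda>i. f i (y i)) \<longlongrightarrow> G y) D"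
    and bounded: "eventually (\<lambda>i. \<forall>a\<in>A i. \<bar>f i a\<bar> \<le> B) D"
  shows "((\<lambda>i. SUP a\<in>A i. f i a) \<longlongrightarrow> (SUP y\<in>{y. eventually (\<lambda>i. y i \<in> A i) D}. G y)) D"
    (is "(_ \<longlongrightarrow> (SUP y\<in>?S. G y)) D")
proof (cases "eventually (\<lambda>i. A i = {}) D")
  case True
  have "\<not> eventually (\<lambda>i. y i \<in> A i) D" for y
  proof -
    have "eventually (\<lambda>i. y i \<notin> A i) D" using True by (rule eventually_mono) simp
    then show ?thesis using ultrafilter_eventually_not_iff[OF D] by blast
  qed
  then have "?S = {}" by blast
  have "eventually (\<lambda>i. (SUP a\<in>A i. f i a) = (SUP y\<in>?S. G y)) D"
    using True by (rule eventually_mono) (simp add: \<open>?S = {}\<close>)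
  then show ?thesis by (rule tendsto_eventually)
next
  case False
  then have "eventually (\<lambda>i. A i \<noteq> {}) D"
    using ultrafilter_eventually_not_iff[OF D, of "\<lambda>i. A i = {}"] by simp
  with D conv bounded show ?thesis by (rule ultrafilter_tendsto_SUP_nonempty)
qed

lemma INF_real_eq_uminus_SUP:
  fixes f :: "'a \<Rightarrow> real"
  shows "(INF a\<in>A. f a) = - (SUP a\<in>A. - f a)"
  by (simp add: Inf_real_def image_image)

lemma ultrafilter_tendsto_INF:
  fixes f :: "'i \<Rightarrow> 'a \<Rightarrow> real" and G :: "('i \<Rightarrow> 'a) \<Rightarrow> real"
  assumes D: "ultrafilter_filter D"
    and conv: "\<And>y. eventually (\<lambda>i. y i \<in> A i) D \<Longrightarrow> ((\<lambda>i. f i (y i)) \<longlongrightarrow> G y) D"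
    and bounded: "eventually (\<lambda>i. \<forall>a\<in>A i. \<bar>f i a\<bar> \<le> B) D"
  shows "((\<lambda>i. INF a\<in>A i. f i a) \<longlongrightarrow> (INF y\<in>{y. eventually (\<lambda>i. y i \<in> A i) D}. G y)) D"
proof -
  have "((\<lambda>i. SUP a\<in>A i. - f i a) \<longlongrightarrow> (SUP y\<in>{y. eventually (\<lambda>i. y i \<in> A i) D}. - G y)) D"
    using bounded by (intro ultrafilter_tendsto_SUP[OF D] tendsto_minus conv) simp_all
  then show ?thesis
    unfolding INF_real_eq_uminus_SUP by (rule tendsto_minus)
qed

lemma abs_SUP_le_max:
  fixes h :: "'a \<Rightarrow> real"
  assumes "\<And>a. a \<in> A \<Longrightarrow> \<bar>h a\<bar> \<le> B"
  shows "\<bar>SUP a\<in>A. h a\<bar> \<le> max B \<bar>Sup {}\<bar>"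
proof (cases "A = {}")
  case False
  then obtain a where "a \<in> A" by blast
  have bdd: "bdd_above (h ` A)"
    using assms by (intro bdd_aboveI2[where M=B]) (auto simp: abs_le_iff)
  have "(SUP a\<in>A. h a) \<le> B"
    using False assms by (intro cSUP_least) (auto simp: abs_le_iff)
  moreover have "h a \<le> (SUP a\<in>A. h a)" using \<open>a \<in> A\<close> bdd by (rule cSUP_upper)
  moreover have "-B \<le> h a" using assms[OF \<open>a \<in> A\<close>] by linarith
  ultimately show ?thesis by (simp add: abs_le_iff max.coboundedI1)
qed simp

lemma abs_INF_le_max:
  fixes h :: "'a \<Rightarrow> real"
  assumes "\<And>a. a \<in> A \<Longrightarrow> \<bar>h a\<bar> \<le> B"
  shows "\<bar>INF a\<in>A. h a\<bar> \<le> max B \<bar>Sup {}\<bar>"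
  unfolding INF_real_eq_uminus_SUP abs_minus_cancel
  using assms by (intro abs_SUP_le_max) simp

section \<open>Continuous connectives\<close>

lemma cont_conn_tendsto:
  assumes "cont_conn n c" "length y = n" "eventually (\<lambda>i. length (X i) = n) F"
    and "\<And>j. j < n \<Longrightarrow> ((\<lambda>i. X i ! j) \<longlongrightarrow> y ! j) F"
  shows "((\<lambda>i. c (X i)) \<longlongrightarrow> c y) F"
  unfolding tendsto_iff dist_real_def
proof (intro allI impI)
  fix \<epsilon> :: real assume "\<epsilon> > 0"
  then obtain \<delta> where "\<delta> > 0"
    and \<delta>: "\<And>x. length x = n \<Longrightarrow> \<forall>j<n. \<bar>x ! j - y ! j\<bar> < \<delta> \<Longrightarrow> \<bar>c x - c y\<bar> < \<epsilon>"
    using assms(1,2) unfolding cont_conn_def by metis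
  have "\<forall>j\<in>{..<n}. eventually (\<lambda>i. \<bar>X i ! j - y ! j\<bar> < \<delta>) F"
    using assms(4) \<open>\<delta> > 0\<close> by (auto simp: tendsto_iff dist_real_def)
  then have "eventually (\<lambda>i. \<forall>j\<in>{..<n}. \<bar>X i ! j - y ! j\<bar> < \<delta>) F"
    by (intro eventually_ball_finite) auto
  with assms(3) show "eventually (\<lambda>i. \<bar>c (X i) - c y\<bar> < \<epsilon>) F"
    by eventually_elim (auto intro: \<delta>)
qed

lemma bounded_lists_convergent_subseq:
  fixes X :: "nat \<Rightarrow> real list"
  assumes "\<And>k. length (X k) = n" and "\<And>k j. j < n \<Longrightarrow> \<bar>X k ! j\<bar> \<le> B"
  shows "\<exists>r y. strict_mono r \<and> length y = n \<and> (\<forall>j<n. (\<lambda>k. X (r k) ! j) \<longlonglongrightarrow> y ! j)"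
  using assms
proof (induction n arbitrary: X)
  case 0
  show ?case by (intro exI[of _ id] exI[of _ "[]"]) (simp add: strict_mono_def)
next
  case (Suc n)
  have "length (tl (X k)) = n" "\<And>j. j < n \<Longrightarrow> \<bar>tl (X k) ! j\<bar> \<le> B" for k
    using Suc.prems by (simp_all add: nth_tl)
  from Suc.IH[of "\<lambda>k. tl (X k)", OF this] obtain r ys where r: "strict_mono r" "length ys = n"
    and ys: "\<forall>j<n. (\<lambda>k. tl (X (r k)) ! j) \<longlonglongrightarrow> ys ! j"
    by blast
  obtain s where s: "strict_mono s" "monoseq (\<lambda>k. X (r (s k)) ! 0)"
    using seq_monosub[of "\<lambda>k. X (r k) ! 0"] by (auto simp: o_def)
  have "Bseq (\<lambda>k. X (r (s k)) ! 0)"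
    using Suc.prems(2) by (intro BseqI'[where K=B]) simp
  with s(2) have "convergent (\<lambda>k. X (r (s k)) ! 0)"
    by (rule Bseq_monoseq_convergent[rotated])
  then obtain l where l: "(\<lambda>k. X (r (s k)) ! 0) \<longlonglongrightarrow> l"
    unfolding convergent_def by blast
  have "(\<lambda>k. X (r (s k)) ! j) \<longlonglongrightarrow> (l # ys) ! j" if "j < Suc n" for j
  proof (cases j)
    case (Suc j')
    have "(\<lambda>k. tl (X (r (s k))) ! j') \<longlonglongrightarrow> ys ! j'"
      using LIMSEQ_subseq_LIMSEQ[OF ys[rule_format] s(1), of j'] that Suc by (simp add: o_def)
    then show ?thesis using Suc.prems(1) that Suc by (simp add: nth_tl)
  qed (use l in simp)
  moreover have "strict_mono (r \<circ> s)" using r(1) s(1) by (rule strict_mono_o)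
  ultimately show ?case
    using r(2) by (intro exI[of _ "r \<circ> s"] exI[of _ "l # ys"]) (simp add: o_def)
qed

lemma cont_conn_bounded:
  assumes "cont_conn n c"
  shows "\<exists>K. \<forall>x. length x = n \<and> (\<forall>j<n. \<bar>x ! j\<bar> \<le> B) \<longrightarrow> \<bar>c x\<bar> \<le> K"
proof (rule ccontr)
  assume "\<not> ?thesis"
  then have "\<forall>K. \<exists>x. length x = n \<and> (\<forall>j<n. \<bar>x ! j\<bar> \<le> B) \<and> K < \<bar>c x\<bar>"
    by (simp add: not_le)
  then have "\<forall>k::nat. \<exists>x. length x = n \<and> (\<forall>j<n. \<bar>x ! j\<bar> \<le> B) \<and> real k < \<bar>c x\<bar>"
    by blast
  then obtain X where "\<forall>k. length (X k) = n \<and> (\<forall>j<n. \<bar>X k ! j\<bar> \<le> B) \<and> real k < \<bar>c (X k)\<bar>"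
    by (rule choice[elim_format]) blast
  then have X: "\<And>k. length (X k) = n" "\<And>k j. j < n \<Longrightarrow> \<bar>X k ! j\<bar> \<le> B"
    and unbounded: "\<And>k. real k < \<bar>c (X k)\<bar>"
    by blast+
  obtain r y where r: "strict_mono r" and "length y = n"
    and lim: "\<forall>j<n. (\<lambda>k. X (r k) ! j) \<longlonglongrightarrow> y ! j"
    using bounded_lists_convergent_subseq[of X n B, OF X] by blast
  have "(\<lambda>k. c (X (r k))) \<longlonglongrightarrow> c y"
    using lim by (intro cont_conn_tendsto[OF assms \<open>length y = n\<close>]) (simp_all add: X(1))
  then have "(\<lambda>k. \<bar>c (X (r k))\<bar>) \<longlonglongrightarrow> \<bar>c y\<bar>"
    by (rule tendsto_rabs)
  then have "eventually (\<lambda>k. \<bar>c (X (r k))\<bar> < \<bar>c y\<bar> + 1) sequentially"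
    by (rule order_tendstoD) simp
  moreover have "eventually (\<lambda>k. \<bar>c y\<bar> + 1 \<le> real k) sequentially"
    by (rule eventually_sequentiallyI[of "nat \<lceil>\<bar>c y\<bar> + 1\<rceil>"]) linarith
  ultimately obtain k where "\<bar>c (X (r k))\<bar> < \<bar>c y\<bar> + 1" "\<bar>c y\<bar> + 1 \<le> real k"
    using eventually_happens'[OF sequentially_bot eventually_conj] by blast
  moreover have "real k \<le> real (r k)" using strict_mono_imp_increasing[OF r] by simp
  ultimately show False using unbounded[of "r k"] by linarith
qed

lemma finite_fv_trm: "finite (fv_trm t)"
  by (induction t) auto

lemma finite_fv: "finite (fv \<phi>)"
  by (induction \<phi>) (auto simp: finite_fv_trm)

lemma teval_cong: "(\<And>v. v \<in> fv_trm t \<Longrightarrow> \<rho> v = \<rho>' v) \<Longrightarrow> teval N \<rho> t = teval N \<rho>' t"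
proof (induction t)
  case (App f ts)
  then have "map (teval N \<rho>) ts = map (teval N \<rho>') ts" by auto
  then show ?case by (simp del: map_eq_conv)
qed simp

lemma eval_cong: "(\<And>v. v \<in> fv \<phi> \<Longrightarrow> \<rho> v = \<rho>' v) \<Longrightarrow> eval N \<rho> \<phi> = eval N \<rho>' \<phi>"
proof (induction \<phi> arbitrary: \<rho> \<rho>')
  case (FDist t1 t2)
  have "teval N \<rho> t1 = teval N \<rho>' t1" "teval N \<rho> t2 = teval N \<rho>' t2"
    by (rule teval_cong, simp add: FDist)+
  then show ?case by simp
next
  case (FRel P ts)
  have "map (teval N \<rho>) ts = map (teval N \<rho>') ts"
    using FRel.prems by (intro map_cong refl teval_cong) auto
  then show ?case by (simp del: map_eq_conv)
next
  case (FConn c fs)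
  have "map (eval N \<rho>) fs = map (eval N \<rho>') fs"
    using FConn.prems by (intro map_cong refl FConn.IH) auto
  then show ?case by (simp del: map_eq_conv)
next
  case (FSup m x g)
  have "eval N (\<rho>(x := a)) g = eval N (\<rho>'(x := a)) g" for a
    by (rule FSup.IH) (use FSup.prems in auto)
  then show ?case by simp
next
  case (FInf m x g)
  have "eval N (\<rho>(x := a)) g = eval N (\<rho>'(x := a)) g" for a
    by (rule FInf.IH) (use FInf.prems in auto)
  then show ?case by simp
qed

section \<open>Families with an emerging metric\<close>

locale emerging_family =
  fixes M :: "'i \<Rightarrow> ('f, 'p, 'a) mstruct" and D :: "'i filter"
    and arf :: "'f \<Rightarrow> nat" and arp :: "'p \<Rightarrow> nat"
  assumes ultrafilter: "ultrafilter_filter D"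
    and emerging: "emerging_metric arf arp M D"
begin

lemma D_neq_bot: "D \<noteq> bot"
  using ultrafilter by (rule ultrafilter_filter_neq_bot)

lemma eventually_not_iff: "eventually (\<lambda>i. \<not> P i) D \<longleftrightarrow> \<not> eventually P D"
  using ultrafilter by (rule ultrafilter_eventually_not_iff)

lemma lstruct: "lstruct arf (M i)"
  using emerging by (simp add: emerging_metric_def)

lemma Srt_mono: "m \<le> k \<Longrightarrow> Srt (M i) m \<subseteq> Srt (M i) k"
  using lstruct[of i] unfolding lstruct_def by (metis lift_Suc_mono_le)

lemma Dst_nonneg: "x \<in> Srt (M i) m \<Longrightarrow> y \<in> Srt (M i) k \<Longrightarrow> 0 \<le> Dst (M i) x y"
  using lstruct[of i] unfolding lstruct_def univ_def by blast

lemma Dst_self_eventually: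
  "in_ult M D x \<Longrightarrow> eventually (\<lambda>i. Dst (M i) (x i) (x i) = 0) D"
  using emerging by (simp add: emerging_metric_def)

lemma Dst_commute_eventually: "in_ult M D x \<Longrightarrow> in_ult M D y \<Longrightarrow>
    eventually (\<lambda>i. Dst (M i) (x i) (y i) = Dst (M i) (y i) (x i)) D"
  using emerging by (simp add: emerging_metric_def)

lemma Dst_triangle_eventually: "in_ult M D x \<Longrightarrow> in_ult M D y \<Longrightarrow> in_ult M D z \<Longrightarrow>
    eventually (\<lambda>i. Dst (M i) (x i) (z i) \<le> Dst (M i) (x i) (y i) + Dst (M i) (y i) (z i)) D"
  using emerging by (simp add: emerging_metric_def)

lemma in_S_app_seq: "\<exists>k. \<forall>xs. length xs = arf f \<and> (\<forall>x\<in>set xs. in_S M D m x) \<longrightarrow>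
    in_S M D k (app_seq M f xs)"
  using emerging by (simp add: emerging_metric_def)

lemma Dst_le_eventually: "in_S M D m x \<Longrightarrow> in_S M D m y \<Longrightarrow>
    eventually (\<lambda>i. Dst (M i) (x i) (y i) \<le> real m) D"
  using emerging by (simp add: emerging_metric_def)

lemma app_seq_continuous: "\<epsilon> > 0 \<Longrightarrow> \<exists>\<delta>>0. \<forall>xs ys. length xs = arf f \<and> length ys = arf f
    \<and> (\<forall>x\<in>set xs. in_S M D m x) \<and> (\<forall>y\<in>set ys. in_S M D m y)
    \<and> (\<forall>j<arf f. eventually (\<lambda>i. Dst (M i) ((xs ! j) i) ((ys ! j) i) < \<delta>) D) \<longrightarrow>
    eventually (\<lambda>i. Dst (M i) (app_seq M f xs i) (app_seq M f ys i) < \<epsilon>) D"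
  using emerging unfolding emerging_metric_def by blast

lemma rel_seq_open: "length xs0 = arp P \<Longrightarrow> \<forall>x\<in>set xs0. in_S M D m x \<Longrightarrow> \<not> rel_seq M D P xs0 \<Longrightarrow>
    \<exists>\<delta>>0. \<forall>xs. length xs = arp P \<and> (\<forall>x\<in>set xs. in_ult M D x)
      \<and> (\<forall>j<arp P. eventually (\<lambda>i. Dst (M i) ((xs0 ! j) i) ((xs ! j) i) < \<delta>) D) \<longrightarrow>
      \<not> rel_seq M D P xs"
  using emerging unfolding emerging_metric_def by blast

lemma in_S_mono: "in_S M D m x \<Longrightarrow> m \<le> k \<Longrightarrow> in_S M D k x"
  unfolding in_S_def by (erule eventually_mono) (use Srt_mono in blast)

lemma in_S_imp_in_ult: "in_S M D m x \<Longrightarrow> in_ult M D x"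
  unfolding in_S_def in_ult_def univ_def by (erule eventually_mono) blast

lemma is_local_imp_in_ult: "is_local M D x \<Longrightarrow> in_ult M D x"
  unfolding is_local_def using in_S_imp_in_ult by blast

lemma is_local_common_sort:
  assumes "finite X" "\<forall>x\<in>X. is_local M D x"
  shows "\<exists>k. \<forall>x\<in>X. in_S M D k x"
  using assms
proof (induction X rule: finite_induct)
  case (insert x X)
  then obtain k m where "\<forall>y\<in>X. in_S M D k y" "in_S M D m x"
    by (auto simp: is_local_def)
  then have "\<forall>y\<in>insert x X. in_S M D (max k m) y"
    by (auto intro: in_S_mono)
  then show ?case by blast
qed simp

lemma Fn_Srt_eventually:
  "\<exists>k. eventually (\<lambda>i. \<forall>xs. length xs = arf f \<and> set xs \<subseteq> Srt (M i) m
     \<longrightarrow> Fn (M i) f xs \<in> Srt (M i) k) D"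
proof -
  obtain k where k: "\<And>xs. length xs = arf f \<Longrightarrow> \<forall>x\<in>set xs. in_S M D m x \<Longrightarrow>
      in_S M D k (app_seq M f xs)"
    using in_S_app_seq by blast
  have "eventually (\<lambda>i. \<forall>xs\<in>{xs. length xs = arf f \<and> set xs \<subseteq> Srt (M i) m}.
      Fn (M i) f xs \<in> Srt (M i) k) D"
  proof (rule ultrafilter_eventually_ball[OF ultrafilter])
    fix y :: "'i \<Rightarrow> 'a list"
    assume y: "eventually (\<lambda>i. y i \<in> {xs. length xs = arf f \<and> set xs \<subseteq> Srt (M i) m}) D"
    define xs where "xs = map (\<lambda>j i. y i ! j) [0..<arf f]"
    have "in_S M D m (\<lambda>i. y i ! j)" if "j < arf f" for j
      unfolding in_S_def using y by (rule eventually_mono) (use that nth_mem in force)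
    then have "in_S M D k (app_seq M f xs)"
      by (intro k) (auto simp: xs_def)
    moreover have "eventually (\<lambda>i. app_seq M f xs i = Fn (M i) f (y i)) D"
      using y by (rule eventually_mono) (clarsimp simp: app_seq_def xs_def o_def, metis map_nth)
    ultimately show "eventually (\<lambda>i. Fn (M i) f (y i) \<in> Srt (M i) k) D"
      unfolding in_S_def by eventually_elim simp
  qed
  then show ?thesis by auto
qed

lemma Dst_le_Srt_eventually:
  "eventually (\<lambda>i. \<forall>x\<in>Srt (M i) m. \<forall>y\<in>Srt (M i) m. Dst (M i) x y \<le> real m) D"
proof -
  have "eventually (\<lambda>i. \<forall>p\<in>Srt (M i) m \<times> Srt (M i) m. Dst (M i) (fst p) (snd p) \<le> real m) D"
  proof (rule ultrafilter_eventually_ball[OF ultrafilter])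
    fix p :: "'i \<Rightarrow> 'a \<times> 'a"
    assume p: "eventually (\<lambda>i. p i \<in> Srt (M i) m \<times> Srt (M i) m) D"
    have "in_S M D m (\<lambda>i. fst (p i))" "in_S M D m (\<lambda>i. snd (p i))"
      unfolding in_S_def using p by (rule eventually_mono, force)+
    then show "eventually (\<lambda>i. Dst (M i) (fst (p i)) (snd (p i)) \<le> real m) D"
      by (rule Dst_le_eventually)
  qed
  then show ?thesis by (rule eventually_mono) auto
qed

lemma teval_Srt_eventually:
  assumes "wf_trm arf t"
  shows "\<exists>k. eventually (\<lambda>i. \<forall>\<rho>. \<rho> ` fv_trm t \<subseteq> Srt (M i) m
    \<longrightarrow> teval (M i) \<rho> t \<in> Srt (M i) k) D"
  using assms
proof (induction t)
  case (Var v)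
  show ?case by (intro exI[of _ m]) simp
next
  case (App f ts)
  then have "\<forall>t\<in>set ts. \<exists>k. eventually (\<lambda>i. \<forall>\<rho>. \<rho> ` fv_trm t \<subseteq> Srt (M i) m
      \<longrightarrow> teval (M i) \<rho> t \<in> Srt (M i) k) D"
    by simp
  then obtain kt where kt: "\<forall>t\<in>set ts. eventually (\<lambda>i. \<forall>\<rho>. \<rho> ` fv_trm t \<subseteq> Srt (M i) m
      \<longrightarrow> teval (M i) \<rho> t \<in> Srt (M i) (kt t)) D"
    by (rule bchoice[elim_format]) blast
  define K where "K = Max (insert 0 (kt ` set ts))"
  have kt_le: "kt t \<le> K" if "t \<in> set ts" for t
    using that by (simp add: K_def)
  obtain k where k: "eventually (\<lambda>i. \<forall>xs. length xs = arf f \<and> set xs \<subseteq> Srt (M i) K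
      \<longrightarrow> Fn (M i) f xs \<in> Srt (M i) k) D"
    using Fn_Srt_eventually by blast
  have "eventually (\<lambda>i. \<forall>t\<in>set ts. \<forall>\<rho>. \<rho> ` fv_trm t \<subseteq> Srt (M i) m
      \<longrightarrow> teval (M i) \<rho> t \<in> Srt (M i) (kt t)) D"
    using kt by (intro eventually_ball_finite) auto
  then have "eventually (\<lambda>i. \<forall>\<rho>. \<rho> ` fv_trm (App f ts) \<subseteq> Srt (M i) m
      \<longrightarrow> teval (M i) \<rho> (App f ts) \<in> Srt (M i) k) D"
    using k
  proof eventually_elim
    case (elim i)
    show ?case
    proof (intro allI impI)
      fix \<rho> assume \<rho>: "\<rho> ` fv_trm (App f ts) \<subseteq> Srt (M i) m"
      have "teval (M i) \<rho> t \<in> Srt (M i) K" if "t \<in> set ts" for t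
      proof -
        have "\<rho> ` fv_trm t \<subseteq> Srt (M i) m" using \<rho> that by auto
        then have "teval (M i) \<rho> t \<in> Srt (M i) (kt t)" using elim(1) that by blast
        then show ?thesis using Srt_mono[OF kt_le[OF that]] by blast
      qed
      then have "set (map (teval (M i) \<rho>) ts) \<subseteq> Srt (M i) K" by auto
      then show "teval (M i) \<rho> (App f ts) \<in> Srt (M i) k"
        using elim(2) App.prems by simp
    qed
  qed
  then show ?case by blast
qed

lemma is_local_app_seq:
  assumes "length xs = arf f" "\<forall>x\<in>set xs. is_local M D x"
  shows "is_local M D (app_seq M f xs)"
proof -
  obtain m where "\<forall>x\<in>set xs. in_S M D m x"
    using is_local_common_sort[of "set xs"] assms(2) by blast
  moreover obtain k where "\<forall>xs. length xs = arf f \<and> (\<forall>x\<in>set xs. in_S M D m x) \<longrightarrow>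
      in_S M D k (app_seq M f xs)"
    using in_S_app_seq by blast
  ultimately show ?thesis using assms(1) unfolding is_local_def by blast
qed

lemma teval_eq_app_seq:
  "(\<lambda>i. teval (M i) (\<lambda>v. e v i) (App f ts)) = app_seq M f (map (\<lambda>t i. teval (M i) (\<lambda>v. e v i) t) ts)"
  by (simp add: app_seq_def o_def)

lemma is_local_teval:
  assumes "wf_trm arf t" "\<forall>v\<in>fv_trm t. is_local M D (e v)"
  shows "is_local M D (\<lambda>i. teval (M i) (\<lambda>v. e v i) t)"
  using assms
proof (induction t)
  case (App f ts)
  then have "is_local M D (app_seq M f (map (\<lambda>t i. teval (M i) (\<lambda>v. e v i) t) ts))"
    by (intro is_local_app_seq) auto
  then show ?case by (simp only: teval_eq_app_seq)
qed simp

section \<open>The local ultraproduct\<close>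

lemma inf_close_iff:
  "inf_close M D x y \<longleftrightarrow> (\<forall>\<epsilon>>0. eventually (\<lambda>i. Dst (M i) (x i) (y i) < \<epsilon>) D)"
proof
  assume close: "inf_close M D x y"
  show "\<forall>\<epsilon>>0. eventually (\<lambda>i. Dst (M i) (x i) (y i) < \<epsilon>) D"
  proof (intro allI impI)
    fix \<epsilon> :: real assume "\<epsilon> > 0"
    then obtain n where "1 / real (Suc n) < \<epsilon>" by (rule nat_approx_posE)
    moreover have "eventually (\<lambda>i. Dst (M i) (x i) (y i) \<le> 1 / real (Suc n)) D"
      using close unfolding inf_close_def by blast
    ultimately show "eventually (\<lambda>i. Dst (M i) (x i) (y i) < \<epsilon>) D"
      by (auto elim: eventually_mono)
  qed
next
  assume small: "\<forall>\<epsilon>>0. eventually (\<lambda>i. Dst (M i) (x i) (y i) < \<epsilon>) D"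
  show "inf_close M D x y"
    unfolding inf_close_def
  proof
    fix n :: nat
    have "eventually (\<lambda>i. Dst (M i) (x i) (y i) < 1 / real (Suc n)) D"
      using small by simp
    then show "eventually (\<lambda>i. Dst (M i) (x i) (y i) \<le> 1 / real (Suc n)) D"
      by (rule eventually_mono) simp
  qed
qed

lemma inf_close_eventually_less:
  "inf_close M D x y \<Longrightarrow> \<epsilon> > 0 \<Longrightarrow> eventually (\<lambda>i. Dst (M i) (x i) (y i) < \<epsilon>) D"
  unfolding inf_close_iff by blast

lemma inf_close_refl: "in_ult M D x \<Longrightarrow> inf_close M D x x"
  unfolding inf_close_def by (auto dest!: Dst_self_eventually elim!: eventually_mono)

lemma inf_close_sym:
  assumes "in_ult M D x" "in_ult M D y" "inf_close M D x y"
  shows "inf_close M D y x"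
  unfolding inf_close_iff
proof (intro allI impI)
  fix \<epsilon> :: real assume "\<epsilon> > 0"
  with assms(3) have "eventually (\<lambda>i. Dst (M i) (x i) (y i) < \<epsilon>) D"
    unfolding inf_close_iff by blast
  with Dst_commute_eventually[OF assms(1,2)]
  show "eventually (\<lambda>i. Dst (M i) (y i) (x i) < \<epsilon>) D"
    by eventually_elim simp
qed

lemma inf_close_trans:
  assumes "in_ult M D x" "in_ult M D y" "in_ult M D z"
    and "inf_close M D x y" "inf_close M D y z"
  shows "inf_close M D x z"
  unfolding inf_close_iff
proof (intro allI impI)
  fix \<epsilon> :: real assume "\<epsilon> > 0"
  then have "\<epsilon> / 2 > 0" by simp
  with assms(4,5) have "eventually (\<lambda>i. Dst (M i) (x i) (y i) < \<epsilon> / 2) D"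
    and "eventually (\<lambda>i. Dst (M i) (y i) (z i) < \<epsilon> / 2) D"
    by (blast intro: inf_close_eventually_less)+
  with Dst_triangle_eventually[OF assms(1-3)]
  show "eventually (\<lambda>i. Dst (M i) (x i) (z i) < \<epsilon>) D"
    by eventually_elim simp
qed

lemma lm_loc_eq:
  assumes "is_local M D x" "is_local M D y" "inf_close M D x y"
  shows "lm_loc M D x = lm_loc M D y"
proof -
  have x: "in_ult M D x" and y: "in_ult M D y"
    using assms(1,2) by (simp_all add: is_local_imp_in_ult)
  have "inf_close M D y x" using x y assms(3) by (rule inf_close_sym)
  then have "inf_close M D x z \<longleftrightarrow> inf_close M D y z" if "is_local M D z" for z
    using inf_close_trans[OF y x is_local_imp_in_ult[OF that]]
      inf_close_trans[OF x y is_local_imp_in_ult[OF that] assms(3)]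
    by blast
  then show ?thesis unfolding lm_loc_def by blast
qed

lemma rep_lm_loc: "is_local M D x \<Longrightarrow> rep (lm_loc M D x) \<in> lm_loc M D x"
  unfolding rep_def
  by (rule someI[of "\<lambda>z. z \<in> lm_loc M D x" x])
    (simp add: lm_loc_def inf_close_refl is_local_imp_in_ult)

lemma tendsto_Dst_inf_close:
  assumes ult: "in_ult M D x" "in_ult M D x'" "in_ult M D y" "in_ult M D y'"
    and close: "inf_close M D x x'" "inf_close M D y y'"
    and lim: "((\<lambda>i. Dst (M i) (x i) (y i)) \<longlongrightarrow> L) D"
  shows "((\<lambda>i. Dst (M i) (x' i) (y' i)) \<longlongrightarrow> L) D"
proof (rule Lim_transform[OF lim])
  have close': "inf_close M D x' x" "inf_close M D y' y"
    using inf_close_sym ult close by blast+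
  show "((\<lambda>i. Dst (M i) (x' i) (y' i) - Dst (M i) (x i) (y i)) \<longlongrightarrow> 0) D"
    unfolding tendsto_iff dist_real_def
  proof (intro allI impI)
    fix \<epsilon> :: real assume "\<epsilon> > 0"
    then have "\<epsilon> / 4 > 0" by simp
    with close close' have "eventually (\<lambda>i. Dst (M i) (x i) (x' i) < \<epsilon> / 4) D"
      "eventually (\<lambda>i. Dst (M i) (x' i) (x i) < \<epsilon> / 4) D"
      "eventually (\<lambda>i. Dst (M i) (y i) (y' i) < \<epsilon> / 4) D"
      "eventually (\<lambda>i. Dst (M i) (y' i) (y i) < \<epsilon> / 4) D"
      by (blast intro: inf_close_eventually_less)+
    \<comment> \<open>\<open>d(x',y') \<le> d(x',x) + d(x,y) + d(y,y')\<close> and \<open>d(x,y) \<le> d(x,x') + d(x',y') + d(y',y)\<close>\<close>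
    moreover note Dst_triangle_eventually[OF ult(2,1,4)] Dst_triangle_eventually[OF ult(1,3,4)]
      Dst_triangle_eventually[OF ult(1,2,3)] Dst_triangle_eventually[OF ult(2,4,3)]
    ultimately show "eventually (\<lambda>i. \<bar>Dst (M i) (x' i) (y' i) - Dst (M i) (x i) (y i) - 0\<bar> < \<epsilon>) D"
      by eventually_elim (simp only: diff_zero abs_less_iff, linarith)
  qed
qed

lemma inf_close_app_seq:
  assumes "length xs = arf f" "length ys = arf f"
    and "\<forall>x\<in>set xs \<union> set ys. is_local M D x"
    and "\<forall>j<arf f. inf_close M D (xs ! j) (ys ! j)"
  shows "inf_close M D (app_seq M f xs) (app_seq M f ys)"
  unfolding inf_close_iff
proof (intro allI impI)
  fix \<epsilon> :: real assume "\<epsilon> > 0"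
  obtain K where K: "\<forall>x\<in>set xs \<union> set ys. in_S M D K x"
    using is_local_common_sort[of "set xs \<union> set ys"] assms(3) by blast
  obtain \<delta> where "\<delta> > 0" and \<delta>: "\<forall>xs ys. length xs = arf f \<and> length ys = arf f
      \<and> (\<forall>x\<in>set xs. in_S M D K x) \<and> (\<forall>y\<in>set ys. in_S M D K y)
      \<and> (\<forall>j<arf f. eventually (\<lambda>i. Dst (M i) ((xs ! j) i) ((ys ! j) i) < \<delta>) D) \<longrightarrow>
      eventually (\<lambda>i. Dst (M i) (app_seq M f xs i) (app_seq M f ys i) < \<epsilon>) D"
    using app_seq_continuous[OF \<open>\<epsilon> > 0\<close>, of f K] by blast
  have "\<forall>j<arf f. eventually (\<lambda>i. Dst (M i) ((xs ! j) i) ((ys ! j) i) < \<delta>) D"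
    using assms(4) \<open>\<delta> > 0\<close> by (blast intro: inf_close_eventually_less)
  then show "eventually (\<lambda>i. Dst (M i) (app_seq M f xs i) (app_seq M f ys i) < \<epsilon>) D"
    using \<delta> K assms(1,2) by blast
qed

lemma Fn_Mloc:
  assumes "length xs = arf f" "\<forall>x\<in>set xs. is_local M D x"
  shows "Fn (Mloc M D) f (map (lm_loc M D) xs) = lm_loc M D (app_seq M f xs)"
proof -
  let ?ys = "map (\<lambda>x. rep (lm_loc M D x)) xs"
  have reps: "\<forall>y\<in>set ?ys. is_local M D y" "\<forall>j<arf f. inf_close M D (?ys ! j) (xs ! j)"
    using assms rep_lm_loc
    by (auto simp: lm_loc_def inf_close_sym is_local_imp_in_ult)
  have "lm_loc M D (app_seq M f ?ys) = lm_loc M D (app_seq M f xs)"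
    using assms reps
    by (intro lm_loc_eq is_local_app_seq inf_close_app_seq) auto
  then show ?thesis by (simp add: Mloc_def o_def)
qed

lemma Rel_Mloc:
  assumes len: "length xs = arp P" and local: "\<forall>x\<in>set xs. is_local M D x"
  shows "Rel (Mloc M D) P (map (lm_loc M D) xs) \<longleftrightarrow> rel_seq M D P xs"
proof
  assume "rel_seq M D P xs"
  moreover have "\<forall>j<length xs. xs ! j \<in> lm_loc M D (xs ! j)"
    using local by (auto simp: lm_loc_def inf_close_refl is_local_imp_in_ult)
  ultimately show "Rel (Mloc M D) P (map (lm_loc M D) xs)"
    by (auto simp: Mloc_def)
next
  assume "Rel (Mloc M D) P (map (lm_loc M D) xs)"
  then obtain ys where ys: "length ys = length xs" "\<forall>j<length xs. ys ! j \<in> lm_loc M D (xs ! j)"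
    and "rel_seq M D P ys"
    by (auto simp: Mloc_def)
  show "rel_seq M D P xs"
  proof (rule ccontr)
    assume "\<not> rel_seq M D P xs"
    obtain K where "\<forall>x\<in>set xs. in_S M D K x"
      using is_local_common_sort[of "set xs"] local by blast
    then obtain \<delta> where "\<delta> > 0" and \<delta>: "\<forall>zs. length zs = arp P \<and> (\<forall>z\<in>set zs. in_ult M D z)
        \<and> (\<forall>j<arp P. eventually (\<lambda>i. Dst (M i) ((xs ! j) i) ((zs ! j) i) < \<delta>) D) \<longrightarrow>
        \<not> rel_seq M D P zs"
      using rel_seq_open len \<open>\<not> rel_seq M D P xs\<close> by blast
    have "\<forall>z\<in>set ys. in_ult M D z"
      using ys by (auto simp: lm_loc_def in_set_conv_nth is_local_imp_in_ult)
    moreover have "\<forall>j<arp P. eventually (\<lambda>i. Dst (M i) ((xs ! j) i) ((ys ! j) i) < \<delta>) D"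
      using ys len \<open>\<delta> > 0\<close> by (auto simp: lm_loc_def intro: inf_close_eventually_less)
    ultimately show False
      using \<delta> ys(1) len \<open>rel_seq M D P ys\<close> by auto
  qed
qed

lemma tendsto_Dst_Mloc:
  assumes "is_local M D x" "is_local M D y"
  shows "((\<lambda>i. Dst (M i) (x i) (y i)) \<longlongrightarrow> Dst (Mloc M D) (lm_loc M D x) (lm_loc M D y)) D"
proof -
  let ?x' = "rep (lm_loc M D x)" and ?y' = "rep (lm_loc M D y)"
  obtain K where "in_S M D K x" "in_S M D K y"
    using is_local_common_sort[of "{x, y}"] assms by auto
  then have "eventually (\<lambda>i. x i \<in> Srt (M i) K \<and> y i \<in> Srt (M i) K) D"
    unfolding in_S_def by (rule eventually_conj)
  with Dst_le_Srt_eventually[of K]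
  have "eventually (\<lambda>i. \<bar>Dst (M i) (x i) (y i)\<bar> \<le> real K) D"
  proof eventually_elim
    case (elim i)
    then have "0 \<le> Dst (M i) (x i) (y i)" by (blast intro: Dst_nonneg)
    with elim show ?case by simp
  qed
  from ultrafilter_bounded_tendsto[OF ultrafilter this]
  obtain L where L: "((\<lambda>i. Dst (M i) (x i) (y i)) \<longlongrightarrow> L) D" ..
  have x': "is_local M D ?x'" "inf_close M D x ?x'"
    and y': "is_local M D ?y'" "inf_close M D y ?y'"
    using rep_lm_loc[OF assms(1)] rep_lm_loc[OF assms(2)] by (simp_all add: lm_loc_def)
  have "((\<lambda>i. Dst (M i) (?x' i) (?y' i)) \<longlongrightarrow> L) D"
    using assms x' y' by (intro tendsto_Dst_inf_close[OF _ _ _ _ _ _ L]) (simp_all add: is_local_imp_in_ult)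
  then have "Dst (Mloc M D) (lm_loc M D x) (lm_loc M D y) = L"
    using D_neq_bot by (simp add: Mloc_def tendsto_Lim)
  with L show ?thesis by simp
qed

lemma teval_Mloc:
  assumes "wf_trm arf t" "\<forall>v\<in>fv_trm t. is_local M D (e v)"
  shows "teval (Mloc M D) (\<lambda>v. lm_loc M D (e v)) t = lm_loc M D (\<lambda>i. teval (M i) (\<lambda>v. e v i) t)"
  using assms
proof (induction t)
  case (App f ts)
  let ?xs = "map (\<lambda>t i. teval (M i) (\<lambda>v. e v i) t) ts"
  have "map (teval (Mloc M D) (\<lambda>v. lm_loc M D (e v))) ts = map (lm_loc M D) ?xs"
    using App by auto
  moreover have "\<forall>x\<in>set ?xs. is_local M D x"
    using App.prems is_local_teval by auto
  ultimately have "teval (Mloc M D) (\<lambda>v. lm_loc M D (e v)) (App f ts) = lm_loc M D (app_seq M f ?xs)"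
    using App.prems Fn_Mloc[of ?xs f] by (simp del: map_eq_conv)
  then show ?case by (simp only: teval_eq_app_seq)
qed simp

section \<open>Evaluation of formulas\<close>

lemma fun_upd_image_subset_Srt:
  assumes "\<rho> ` (A - {x}) \<subseteq> Srt (M i) k" "a \<in> Srt (M i) m"
  shows "(\<rho>(x := a)) ` A \<subseteq> Srt (M i) (max k m)"
  using assms Srt_mono[of k "max k m" i] Srt_mono[of m "max k m" i] by auto

lemma eval_fun_upd_bounded:
  assumes "eventually (\<lambda>i. \<forall>\<rho>. \<rho> ` fv g \<subseteq> Srt (M i) (max k m) \<longrightarrow> \<bar>eval (M i) \<rho> g\<bar> \<le> B) D"
  shows "eventually (\<lambda>i. \<forall>\<rho>. \<rho> ` (fv g - {x}) \<subseteq> Srt (M i) k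
    \<longrightarrow> (\<forall>a\<in>Srt (M i) m. \<bar>eval (M i) (\<rho>(x := a)) g\<bar> \<le> B)) D"
  using assms by (rule eventually_mono) (blast dest: fun_upd_image_subset_Srt)

lemma eval_FDist_bounded:
  assumes "wf_fml arf arp (FDist t1 t2)"
  shows "\<exists>B. eventually (\<lambda>i. \<forall>\<rho>. \<rho> ` fv (FDist t1 t2) \<subseteq> Srt (M i) k
    \<longrightarrow> \<bar>eval (M i) \<rho> (FDist t1 t2)\<bar> \<le> B) D"
proof -
  obtain k1 k2 where
    k1: "eventually (\<lambda>i. \<forall>\<rho>. \<rho> ` fv_trm t1 \<subseteq> Srt (M i) k \<longrightarrow> teval (M i) \<rho> t1 \<in> Srt (M i) k1) D"
    and k2: "eventually (\<lambda>i. \<forall>\<rho>. \<rho> ` fv_trm t2 \<subseteq> Srt (M i) k \<longrightarrow> teval (M i) \<rho> t2 \<in> Srt (M i) k2) D"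
    using teval_Srt_eventually assms by (meson wf_fml.simps(1))
  let ?K = "max k1 k2"
  from k1 k2 Dst_le_Srt_eventually[of ?K]
  have "eventually (\<lambda>i. \<forall>\<rho>. \<rho> ` fv (FDist t1 t2) \<subseteq> Srt (M i) k
      \<longrightarrow> \<bar>eval (M i) \<rho> (FDist t1 t2)\<bar> \<le> real ?K) D"
  proof eventually_elim
    case (elim i)
    show ?case
    proof (intro allI impI)
      fix \<rho> assume "\<rho> ` fv (FDist t1 t2) \<subseteq> Srt (M i) k"
      then have "\<rho> ` fv_trm t1 \<subseteq> Srt (M i) k" "\<rho> ` fv_trm t2 \<subseteq> Srt (M i) k"
        by auto
      then have "teval (M i) \<rho> t1 \<in> Srt (M i) k1" "teval (M i) \<rho> t2 \<in> Srt (M i) k2"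
        using elim(1,2) by simp_all
      then have "teval (M i) \<rho> t1 \<in> Srt (M i) ?K" "teval (M i) \<rho> t2 \<in> Srt (M i) ?K"
        using Srt_mono[of k1 ?K i] Srt_mono[of k2 ?K i] by auto
      moreover from this have "0 \<le> Dst (M i) (teval (M i) \<rho> t1) (teval (M i) \<rho> t2)"
        by (rule Dst_nonneg)
      ultimately show "\<bar>eval (M i) \<rho> (FDist t1 t2)\<bar> \<le> real ?K"
        using elim(3) by simp
    qed
  qed
  then show ?thesis by blast
qed

lemma eval_FConn_bounded:
  assumes "cont_conn (length fs) c"
    and "\<forall>g\<in>set fs. \<exists>B. eventually (\<lambda>i. \<forall>\<rho>. \<rho> ` fv g \<subseteq> Srt (M i) k
      \<longrightarrow> \<bar>eval (M i) \<rho> g\<bar> \<le> B) D"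
  shows "\<exists>B. eventually (\<lambda>i. \<forall>\<rho>. \<rho> ` fv (FConn c fs) \<subseteq> Srt (M i) k
    \<longrightarrow> \<bar>eval (M i) \<rho> (FConn c fs)\<bar> \<le> B) D"
proof -
  obtain Bg where Bg: "\<forall>g\<in>set fs. eventually (\<lambda>i. \<forall>\<rho>. \<rho> ` fv g \<subseteq> Srt (M i) k
      \<longrightarrow> \<bar>eval (M i) \<rho> g\<bar> \<le> Bg g) D"
    using assms(2) by (rule bchoice[elim_format]) blast
  define B where "B = Max (insert 0 (Bg ` set fs))"
  have Bg_le: "Bg g \<le> B" if "g \<in> set fs" for g
    using that by (simp add: B_def)
  obtain K where K: "\<forall>x. length x = length fs \<and> (\<forall>j<length fs. \<bar>x ! j\<bar> \<le> B) \<longrightarrow> \<bar>c x\<bar> \<le> K"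
    using cont_conn_bounded[of "length fs" c B] assms(1) by blast
  have "eventually (\<lambda>i. \<forall>g\<in>set fs. \<forall>\<rho>. \<rho> ` fv g \<subseteq> Srt (M i) k
      \<longrightarrow> \<bar>eval (M i) \<rho> g\<bar> \<le> Bg g) D"
    using Bg by (intro eventually_ball_finite) auto
  then have "eventually (\<lambda>i. \<forall>\<rho>. \<rho> ` fv (FConn c fs) \<subseteq> Srt (M i) k
      \<longrightarrow> \<bar>eval (M i) \<rho> (FConn c fs)\<bar> \<le> K) D"
  proof (rule eventually_mono, intro allI impI)
    fix i \<rho>
    assume bounds: "\<forall>g\<in>set fs. \<forall>\<rho>. \<rho> ` fv g \<subseteq> Srt (M i) k \<longrightarrow> \<bar>eval (M i) \<rho> g\<bar> \<le> Bg g"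
      and \<rho>: "\<rho> ` fv (FConn c fs) \<subseteq> Srt (M i) k"
    have "\<bar>eval (M i) \<rho> g\<bar> \<le> B" if "g \<in> set fs" for g
    proof -
      have "\<rho> ` fv g \<subseteq> Srt (M i) k" using \<rho> that by auto
      then show ?thesis using bounds that Bg_le[OF that] by (meson order_trans)
    qed
    then show "\<bar>eval (M i) \<rho> (FConn c fs)\<bar> \<le> K"
      using K by simp
  qed
  then show ?thesis by blast
qed

lemma eval_bounded:
  assumes "wf_fml arf arp \<phi>"
  shows "\<exists>B. eventually (\<lambda>i. \<forall>\<rho>. \<rho> ` fv \<phi> \<subseteq> Srt (M i) k \<longrightarrow> \<bar>eval (M i) \<rho> \<phi>\<bar> \<le> B) D"
  using assms
proof (induction \<phi> arbitrary: k)
  case (FDist t1 t2)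
  then show ?case by (rule eval_FDist_bounded)
next
  case (FRel P ts)
  show ?case by (intro exI[of _ 1]) simp
next
  case (FConn c fs)
  then have "\<forall>g\<in>set fs. \<exists>B. eventually (\<lambda>i. \<forall>\<rho>. \<rho> ` fv g \<subseteq> Srt (M i) k
      \<longrightarrow> \<bar>eval (M i) \<rho> g\<bar> \<le> B) D"
    by simp
  moreover have "cont_conn (length fs) c" using FConn.prems by simp
  ultimately show ?case by (intro eval_FConn_bounded)
next
  case (FSup m x g)
  then obtain B where "eventually (\<lambda>i. \<forall>\<rho>. \<rho> ` fv g \<subseteq> Srt (M i) (max k m)
      \<longrightarrow> \<bar>eval (M i) \<rho> g\<bar> \<le> B) D"
    by fastforce
  from eval_fun_upd_bounded[OF this, of x]
  have "eventually (\<lambda>i. \<forall>\<rho>. \<rho> ` fv (FSup m x g) \<subseteq> Srt (M i) k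
      \<longrightarrow> \<bar>eval (M i) \<rho> (FSup m x g)\<bar> \<le> max B \<bar>Sup {}\<bar>) D"
    by (rule eventually_mono) (simp add: abs_SUP_le_max)
  then show ?case by blast
next
  case (FInf m x g)
  then obtain B where "eventually (\<lambda>i. \<forall>\<rho>. \<rho> ` fv g \<subseteq> Srt (M i) (max k m)
      \<longrightarrow> \<bar>eval (M i) \<rho> g\<bar> \<le> B) D"
    by fastforce
  from eval_fun_upd_bounded[OF this, of x]
  have "eventually (\<lambda>i. \<forall>\<rho>. \<rho> ` fv (FInf m x g) \<subseteq> Srt (M i) k
      \<longrightarrow> \<bar>eval (M i) \<rho> (FInf m x g)\<bar> \<le> max B \<bar>Sup {}\<bar>) D"
    by (rule eventually_mono) (simp add: abs_INF_le_max)
  then show ?case by blast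
qed

lemma eval_fun_upd_eventually_bounded:
  assumes "wf_fml arf arp g" "\<forall>v\<in>fv g - {x}. is_local M D (e v)"
  shows "\<exists>B. eventually (\<lambda>i. \<forall>a\<in>Srt (M i) m. \<bar>eval (M i) ((\<lambda>v. e v i)(x := a)) g\<bar> \<le> B) D"
proof -
  obtain k where "\<forall>v\<in>fv g - {x}. in_S M D k (e v)"
    using is_local_common_sort[of "e ` (fv g - {x})"] assms(2) finite_fv[of g] by blast
  then have "eventually (\<lambda>i. \<forall>v\<in>fv g - {x}. e v i \<in> Srt (M i) k) D"
    unfolding in_S_def using finite_fv[of g] by (intro eventually_ball_finite) auto
  then have env: "eventually (\<lambda>i. (\<lambda>v. e v i) ` (fv g - {x}) \<subseteq> Srt (M i) k) D"
    by (rule eventually_mono) blast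
  obtain B where "eventually (\<lambda>i. \<forall>\<rho>. \<rho> ` fv g \<subseteq> Srt (M i) (max k m)
      \<longrightarrow> \<bar>eval (M i) \<rho> g\<bar> \<le> B) D"
    using eval_bounded[OF assms(1)] by blast
  from eval_fun_upd_bounded[OF this, of x] env
  have "eventually (\<lambda>i. \<forall>a\<in>Srt (M i) m. \<bar>eval (M i) ((\<lambda>v. e v i)(x := a)) g\<bar> \<le> B) D"
    by eventually_elim blast
  then show ?thesis by blast
qed

lemma Srt_Mloc: "Srt (Mloc M D) m = lm_loc M D ` {x. in_S M D m x}"
  by (simp add: Mloc_def)

lemma tendsto_eval_quantifiers:
  assumes wf: "wf_fml arf arp g"
    and local: "\<forall>v\<in>fv g - {x}. is_local M D (e v)"
    and IH: "\<And>e'. \<forall>v\<in>fv g. is_local M D (e' v) \<Longrightarrow>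
      ((\<lambda>i. eval (M i) (\<lambda>v. e' v i) g) \<longlongrightarrow> eval (Mloc M D) (\<lambda>v. lm_loc M D (e' v)) g) D"
  shows "((\<lambda>i. eval (M i) (\<lambda>v. e v i) (FSup m x g))
      \<longlongrightarrow> eval (Mloc M D) (\<lambda>v. lm_loc M D (e v)) (FSup m x g)) D"
    and "((\<lambda>i. eval (M i) (\<lambda>v. e v i) (FInf m x g))
      \<longlongrightarrow> eval (Mloc M D) (\<lambda>v. lm_loc M D (e v)) (FInf m x g)) D"
proof -
  let ?f = "\<lambda>i a. eval (M i) ((\<lambda>v. e v i)(x := a)) g"
  let ?G = "\<lambda>y. eval (Mloc M D) (\<lambda>v. lm_loc M D ((e(x := y)) v)) g"
  have conv: "((\<lambda>i. ?f i (y i)) \<longlongrightarrow> ?G y) D"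
    if "eventually (\<lambda>i. y i \<in> Srt (M i) m) D" for y
  proof -
    have upd: "(\<lambda>v. (e(x := y)) v i) = (\<lambda>v. e v i)(x := y i)" for i
      by (simp add: fun_eq_iff)
    have "((\<lambda>i. eval (M i) (\<lambda>v. (e(x := y)) v i) g) \<longlongrightarrow> ?G y) D"
      using local that by (intro IH) (auto simp: is_local_def in_S_def)
    then show ?thesis unfolding upd .
  qed
  obtain B where bounded: "eventually (\<lambda>i. \<forall>a\<in>Srt (M i) m. \<bar>?f i a\<bar> \<le> B) D"
    using eval_fun_upd_eventually_bounded[OF wf local] by blast
  have Mloc_quantifier: "(\<lambda>c. eval (Mloc M D) ((\<lambda>v. lm_loc M D (e v))(x := c)) g) ` Srt (Mloc M D) m
      = ?G ` {y. eventually (\<lambda>i. y i \<in> Srt (M i) m) D}"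
  proof -
    have "(\<lambda>v. lm_loc M D (e v))(x := lm_loc M D y) = (\<lambda>v. lm_loc M D ((e(x := y)) v))" for y
      by (simp add: fun_eq_iff)
    then show ?thesis by (simp add: Srt_Mloc in_S_def image_image)
  qed
  show "((\<lambda>i. eval (M i) (\<lambda>v. e v i) (FSup m x g))
      \<longlongrightarrow> eval (Mloc M D) (\<lambda>v. lm_loc M D (e v)) (FSup m x g)) D"
    using ultrafilter_tendsto_SUP[OF ultrafilter conv bounded] by (simp add: Mloc_quantifier)
  show "((\<lambda>i. eval (M i) (\<lambda>v. e v i) (FInf m x g))
      \<longlongrightarrow> eval (Mloc M D) (\<lambda>v. lm_loc M D (e v)) (FInf m x g)) D"
    using ultrafilter_tendsto_INF[OF ultrafilter conv bounded] by (simp add: Mloc_quantifier)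
qed

lemma tendsto_eval_FRel:
  assumes "wf_fml arf arp (FRel P ts)" "\<forall>v\<in>fv (FRel P ts). is_local M D (e v)"
  shows "((\<lambda>i. eval (M i) (\<lambda>v. e v i) (FRel P ts))
    \<longlongrightarrow> eval (Mloc M D) (\<lambda>v. lm_loc M D (e v)) (FRel P ts)) D"
proof -
  let ?xs = "map (\<lambda>t i. teval (M i) (\<lambda>v. e v i) t) ts"
  have len: "length ?xs = arp P" and local: "\<forall>x\<in>set ?xs. is_local M D x"
    using assms is_local_teval by auto
  have "map (teval (Mloc M D) (\<lambda>v. lm_loc M D (e v))) ts = map (lm_loc M D) ?xs"
    using assms teval_Mloc by auto
  then have Mloc_value: "eval (Mloc M D) (\<lambda>v. lm_loc M D (e v)) (FRel P ts)
      = (if rel_seq M D P ?xs then 0 else 1)"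
    using Rel_Mloc[OF len local] by (simp del: map_eq_conv)
  have "eventually (\<lambda>i. eval (M i) (\<lambda>v. e v i) (FRel P ts) = (if rel_seq M D P ?xs then 0 else 1)) D"
  proof (cases "rel_seq M D P ?xs")
    case False
    then have "eventually (\<lambda>i. \<not> Rel (M i) P (map (\<lambda>x. x i) ?xs)) D"
      unfolding rel_seq_def eventually_not_iff .
    with False show ?thesis by (simp add: o_def)
  qed (simp add: rel_seq_def o_def)
  then show ?thesis unfolding Mloc_value by (rule tendsto_eventually)
qed

lemma tendsto_eval_Mloc:
  assumes "wf_fml arf arp \<phi>" "\<forall>v\<in>fv \<phi>. is_local M D (e v)"
  shows "((\<lambda>i. eval (M i) (\<lambda>v. e v i) \<phi>) \<longlongrightarrow> eval (Mloc M D) (\<lambda>v. lm_loc M D (e v)) \<phi>) D"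
  using assms
proof (induction \<phi> arbitrary: e)
  case (FDist t1 t2)
  then show ?case
    by (simp add: teval_Mloc tendsto_Dst_Mloc is_local_teval)
next
  case (FRel P ts)
  then show ?case by (rule tendsto_eval_FRel)
next
  case (FConn c fs)
  have lim: "((\<lambda>i. map (eval (M i) (\<lambda>v. e v i)) fs ! j)
      \<longlongrightarrow> map (eval (Mloc M D) (\<lambda>v. lm_loc M D (e v))) fs ! j) D" if "j < length fs" for j
  proof -
    have "wf_fml arf arp (fs ! j)" "\<forall>v\<in>fv (fs ! j). is_local M D (e v)"
      using FConn.prems that by auto
    then show ?thesis using FConn.IH[OF nth_mem[OF that]] that by simp
  qed
  have "((\<lambda>i. c (map (eval (M i) (\<lambda>v. e v i)) fs))
      \<longlongrightarrow> c (map (eval (Mloc M D) (\<lambda>v. lm_loc M D (e v))) fs)) D"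
    by (rule cont_conn_tendsto[OF _ _ _ lim]) (use FConn.prems in simp_all)
  then show ?case by simp
next
  case (FSup m x g)
  have wf: "wf_fml arf arp g" using FSup.prems(1) by simp
  show ?case
    by (rule tendsto_eval_quantifiers(1)[OF wf _ FSup.IH[OF wf]]) (use FSup.prems(2) in auto)
next
  case (FInf m x g)
  have wf: "wf_fml arf arp g" using FInf.prems(1) by simp
  show ?case
    by (rule tendsto_eval_quantifiers(2)[OF wf _ FInf.IH[OF wf]]) (use FInf.prems(2) in auto)
qed

end

theorem theorem2p10:
  fixes M :: "'i \<Rightarrow> ('f, 'p, 'a) mstruct" and D :: "'i filter"
    and arf :: "'f \<Rightarrow> nat" and arp :: "'p \<Rightarrow> nat"
    and \<sigma> :: "('f, 'p) fml" and a :: "'i \<Rightarrow> 'a list" and n m0 :: nat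
  assumes "ultrafilter_filter D"
    and "emerging_metric arf arp M D"
    and "wf_fml arf arp \<sigma>"
    and "fv \<sigma> \<subseteq> {..<n}"
    and "\<forall>i. length (a i) = n"
    and "\<forall>i. set (a i) \<subseteq> Srt (M i) m0"
  shows "((\<lambda>i. eval (M i) (\<lambda>v. a i ! v) \<sigma>) \<longlongrightarrow>
           eval (Mloc M D) (\<lambda>v. map (\<lambda>j. lm_loc M D (\<lambda>i. a i ! j)) [0..<n] ! v) \<sigma>) D"
proof -
  interpret emerging_family M D arf arp
    using assms(1,2) by unfold_locales
  have local: "is_local M D (\<lambda>i. a i ! v)" if "v < n" for v
  proof -
    have "a i ! v \<in> set (a i)" for i
      using assms(5) that by simp
    then have "a i ! v \<in> Srt (M i) m0" for i
      using assms(6) by blast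
    then have "in_S M D m0 (\<lambda>i. a i ! v)" by (simp add: in_S_def)
    then show ?thesis unfolding is_local_def ..
  qed
  have "((\<lambda>i. eval (M i) (\<lambda>v. a i ! v) \<sigma>)
      \<longlongrightarrow> eval (Mloc M D) (\<lambda>v. lm_loc M D (\<lambda>i. a i ! v)) \<sigma>) D"
    using assms(3,4) local by (intro tendsto_eval_Mloc) auto
  moreover have "eval (Mloc M D) (\<lambda>v. lm_loc M D (\<lambda>i. a i ! v)) \<sigma>
      = eval (Mloc M D) (\<lambda>v. map (\<lambda>j. lm_loc M D (\<lambda>i. a i ! j)) [0..<n] ! v) \<sigma>"
    using assms(4) by (intro eval_cong) auto
  ultimately show ?thesis by simp
qed

end
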